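(* Assume the standing conventions of the context. (i) If $m'=m+1$, $Z'$ is regular and $D_Z=\{Z'\}$, then $D_{Z'}=\{Z\}$. (ii) If $m'=m$, $Z$ is regular and $D_{Z'}=\{Z\}$, then $D_Z=\{Z'\}$.
   Context: A symbol is an array $\Lambda=\binom{a'_1,\ldots,a'_{m_1}}{b'_1,\ldots,b'_{m_2}}$ of two strictly decreasing finite sequences of nonnegative integers (top row, bottom row); its defect is $\mathrm{def}(\Lambda)=m_1-m_2$. Standing assumptions: $Z=\binom{a_1,\ldots,a_{m+1}}{b_1,\ldots,b_m}$ is a special symbol of defect $1$, i.e. $a_1\ge b_1\ge a_2\ge b_2\ge\cdots\ge b_m\ge a_{m+1}$; $Z'=\binom{c_1,\ldots,c_{m'}}{d_1,\ldots,d_{m'}}$ is a special symbol of defect $0$, i.e. $c_1\ge d_1\ge c_2\ge d_2\ge\cdots\ge c_{m'}\ge d_{m'}$; and $m'\in\{m,m+1\}$. For a symbol $Y$, $Y_{\mathrm I}$ is the set of entries of $Y$ occurring in exactly one row; $Y$ is regular if no entry occurs in both rows. For $M\subset Z_{\mathrm I}$, $\Lambda_M$ is the symbol obtained from $Z$ by moving every entry of $M$ to the other row (rows re-sorted decreasingly); for $N\subset Z'_{\mathrm I}$, $\Lambda_N$ is obtained from $Z'$ in the same way. $\overline{\mathcal S}_Z=\{\Lambda_M: M\subset Z_{\mathrm I}\}$, $\overline{\mathcal S}_{Z'}=\{\Lambda_N:N\subset Z'_{\mathrm I}\}$; $\mathcal S_{Z,1}$ (resp. $\mathcal S_{Z',0}$)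 is the set of elements of $\overline{\mathcal S}_Z$ of defect $1$ (resp. of $\overline{\mathcal S}_{Z'}$ of defect $0$). Relation $\overline{\mathcal B}^+_{Z,Z'}\subset\overline{\mathcal S}_Z\times\overline{\mathcal S}_{Z'}$: for $\Lambda=\binom{a'_1,\ldots,a'_{m_1}}{b'_1,\ldots,b'_{m_2}}\in\overline{\mathcal S}_Z$ and $\Lambda'=\binom{c'_1,\ldots,c'_{m'_1}}{d'_1,\ldots,d'_{m'_2}}\in\overline{\mathcal S}_{Z'}$, $(\Lambda,\Lambda')\in\overline{\mathcal B}^+_{Z,Z'}$ iff $\mathrm{def}(\Lambda')=1-\mathrm{def}(\Lambda)$ and: if $m'=m$, $a'_i>d'_i\ge a'_{i+1}$ for $1\le i\le m'_2$ and $b'_{i-1}>c'_i\ge b'_i$ for $1\le i\le m'_1$; if $m'=m+1$, $a'_i\ge d'_i>a'_{i+1}$ for $1\le i\le m'_2$ and $b'_{i-1}\ge c'_i>b'_i$ for $1\le i\le m'_1$; here $b'_0=+\infty$ and nonexistent entries $a'_j,b'_j$ beyond the row lengths are $-\infty$. Then $\mathcal D_{Z,Z'}=\overline{\mathcal B}^+_{Z,Z'}\cap(\mathcal S_{Z,1}\times\mathcal S_{Z',0})$, $D_Z=\{\Lambda'\mid (Z,\Lambda')\in\mathcal D_{Z,Z'}\}$ and $D_{Z'}=\{\Lambda\mid(\Lambda,Z')\in\mathcal D_{Z,Z'}\}$. *)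

theory Defs
  imports Main "HOL-Library.Extended_Real"
begin

text \<open>A symbol is a pair (top row, bottom row) of strictly decreasing lists of naturals.\<close>
type_synonym symbol = "nat list \<times> nat list"

definition is_symbol :: "symbol \<Rightarrow> bool" where
  "is_symbol Y \<longleftrightarrow> sorted_wrt (>) (fst Y) \<and> sorted_wrt (>) (snd Y)"

definition defect :: "symbol \<Rightarrow> int" where
  "defect Y = int (length (fst Y)) - int (length (snd Y))"

definition row_of :: "nat set \<Rightarrow> nat list" where
  "row_of S = rev (sorted_list_of_set S)"

definition singles :: "symbol \<Rightarrow> nat set" where
  "singles Y = (set (fst Y) - set (snd Y)) \<union> (set (snd Y) - set (fst Y))"

definition regular :: "symbol \<Rightarrow> bool" where
  "regular Y \<longleftrightarrow> set (fst Y) \<inter> set (snd Y) = {}"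

definition move :: "symbol \<Rightarrow> nat set \<Rightarrow> symbol" where
  "move Y M = (row_of ((set (fst Y) - M) \<union> (set (snd Y) \<inter> M)),
               row_of ((set (snd Y) - M) \<union> (set (fst Y) \<inter> M)))"

definition Sbar :: "symbol \<Rightarrow> symbol set" where
  "Sbar Y = {move Y M | M. M \<subseteq> singles Y}"

definition Sdef :: "symbol \<Rightarrow> int \<Rightarrow> symbol set" where
  "Sdef Y k = {L \<in> Sbar Y. defect L = k}"

definition special1 :: "symbol \<Rightarrow> nat \<Rightarrow> bool" where
  "special1 Z m \<longleftrightarrow> is_symbol Z \<and> length (fst Z) = m + 1 \<and> length (snd Z) = m \<and>
     (\<forall>i<m. fst Z ! i \<ge> snd Z ! i \<and> snd Z ! i \<ge> fst Z ! (i + 1))"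

definition special0 :: "symbol \<Rightarrow> nat \<Rightarrow> bool" where
  "special0 Z m' \<longleftrightarrow> is_symbol Z \<and> length (fst Z) = m' \<and> length (snd Z) = m' \<and>
     (\<forall>i<m'. fst Z ! i \<ge> snd Z ! i) \<and> (\<forall>i. i + 1 < m' \<longrightarrow> snd Z ! i \<ge> fst Z ! (i + 1))"

text \<open>1-based entry of a row; index 0 gives +\<infinity> (b'_0), indices beyond the length give -\<infinity>.\<close>
definition ent :: "nat list \<Rightarrow> nat \<Rightarrow> ereal" where
  "ent xs i = (if i = 0 then PInfty else if i \<le> length xs then ereal (real (xs ! (i - 1))) else MInfty)"

definition Bplus :: "nat \<Rightarrow> nat \<Rightarrow> symbol \<Rightarrow> symbol \<Rightarrow> bool" where
  "Bplus m m' L L' \<longleftrightarrow> defect L' = 1 - defect L \<and>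
     (let a = fst L; b = snd L; c = fst L'; d = snd L' in
      if m' = m then
        (\<forall>i\<in>{1..length d}. ent a i > ent d i \<and> ent d i \<ge> ent a (i + 1)) \<and>
        (\<forall>i\<in>{1..length c}. ent b (i - 1) > ent c i \<and> ent c i \<ge> ent b i)
      else if m' = m + 1 then
        (\<forall>i\<in>{1..length d}. ent a i \<ge> ent d i \<and> ent d i > ent a (i + 1)) \<and>
        (\<forall>i\<in>{1..length c}. ent b (i - 1) \<ge> ent c i \<and> ent c i > ent b i)
      else False)"

definition BplusRel :: "symbol \<Rightarrow> symbol \<Rightarrow> nat \<Rightarrow> nat \<Rightarrow> (symbol \<times> symbol) set" where
  "BplusRel Z Z' m m' = {(L, L'). L \<in> Sbar Z \<and> L' \<in> Sbar Z' \<and> Bplus m m' L L'}"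

definition Dset :: "symbol \<Rightarrow> symbol \<Rightarrow> nat \<Rightarrow> nat \<Rightarrow> (symbol \<times> symbol) set" where
  "Dset Z Z' m m' = BplusRel Z Z' m m' \<inter> (Sdef Z 1 \<times> Sdef Z' 0)"

definition D_Z :: "symbol \<Rightarrow> symbol \<Rightarrow> nat \<Rightarrow> nat \<Rightarrow> symbol set" where
  "D_Z Z Z' m m' = {L'. (Z, L') \<in> Dset Z Z' m m'}"

definition D_Z' :: "symbol \<Rightarrow> symbol \<Rightarrow> nat \<Rightarrow> nat \<Rightarrow> symbol set" where
  "D_Z' Z Z' m m' = {L. (L, Z') \<in> Dset Z Z' m m'}"

end

theory Submission
  imports Defs
begin

text \<open>
  Both statements have the same proof, with the roles of \<open>Z\<close> and \<open>Z'\<close> exchanged. Call \<open>X\<close> the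
  symbol assumed regular and \<open>Y\<close> the other one, so that \<open>X\<close> is the only partner of \<open>Y\<close>.
  Exchanging an entry of \<open>X\<close> with a neighbouring entry of the other row gives another element
  of \<open>S\<close>-bar of the same defect; since it cannot be a partner of \<open>Y\<close>, it violates one of the
  inequalities of \<open>B\<^sup>+\<close>, and this is a strict inequality between entries of \<open>Z\<close> and \<open>Z'\<close>.
  Descending from the last index, these inequalities show that the entries of \<open>Z\<close> and \<open>Z'\<close>
  form one alternating chain (for \<open>m' = m + 1\<close>: \<open>c\<^sub>i > a\<^sub>i \<ge> d\<^sub>i > b\<^sub>i \<ge> c\<^sub>i\<^sub>+\<^sub>1\<close>). So \<open>Y\<close> is
  regular as well, and the entries of \<open>X\<close> cut the chain of \<open>Y\<close> into windows holding two
  consecutive entries each. A partner of \<open>X\<close> arises from \<open>Y\<close> by moving entries between the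
  rows, so its rows are disjoint and its \<open>i\<close>-th entries lie in these windows; this leaves
  only \<open>Y\<close> itself.
\<close>

lemma sorted_desc_nth_less_iff:
  fixes xs :: "'a::linorder list"
  assumes "sorted_wrt (>) xs" "i < length xs" "j < length xs"
  shows "xs ! i < xs ! j \<longleftrightarrow> j < i"
  using sorted_wrt_nth_less[OF assms(1)] assms(2,3)
  by (metis linorder_neqE_nat order.asym)

lemma sorted_desc_distinct: "sorted_wrt (>) (xs :: 'a::linorder list) \<Longrightarrow> distinct xs"
  by (induction xs) auto

lemma sorted_desc_update:
  fixes xs :: "'a::linorder list"
  assumes "sorted_wrt (>) xs" "i < length xs"
    "0 < i \<Longrightarrow> y < xs ! (i - 1)" "Suc i < length xs \<Longrightarrow> xs ! Suc i < y"
  shows "sorted_wrt (>) (xs[i := y])"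
  using assms
  by (auto simp: sorted_wrt_iff_nth_Suc_transp[OF transp_on_greater] nth_list_update)

lemma row_of_set: "sorted_wrt (>) xs \<Longrightarrow> row_of (set xs) = xs"
proof -
  assume "sorted_wrt (>) xs"
  then have "sorted_wrt (<) (rev xs)" by (simp add: sorted_wrt_rev)
  then have "sorted (rev xs)" "distinct (rev xs)" by (simp_all add: strict_sorted_iff)
  then show ?thesis
    unfolding row_of_def by (metis set_rev rev_rev_ident sorted_list_of_set.idem_if_sorted_distinct)
qed

definition strictly_interlaced :: "nat list \<Rightarrow> nat list \<Rightarrow> bool" where
  "strictly_interlaced P Q \<longleftrightarrow> length Q \<le> length P \<and> length P \<le> Suc (length Q) \<and>
     (\<forall>i<length Q. Q ! i < P ! i \<and> (Suc i < length P \<longrightarrow> P ! Suc i < Q ! i))"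

lemma strictly_interlaced_sorted:
  assumes "strictly_interlaced P Q"
  shows "sorted_wrt (>) P" "sorted_wrt (>) Q"
  using assms unfolding strictly_interlaced_def sorted_wrt_iff_nth_Suc_transp[OF transp_on_greater]
  by (metis Suc_less_SucD less_le_trans order.strict_trans)+

lemma strictly_interlaced_disjoint:
  assumes "strictly_interlaced P Q"
  shows "set P \<inter> set Q = {}"
proof (rule ccontr)
  assume "set P \<inter> set Q \<noteq> {}"
  then obtain j k where jk: "j < length P" "k < length Q" "P ! j = Q ! k"
    by (metis disjoint_iff in_set_conv_nth)
  have P: "sorted_wrt (>) P" by (rule strictly_interlaced_sorted[OF assms])
  have Q_k: "Q ! k < P ! k" "Suc k < length P \<Longrightarrow> P ! Suc k < Q ! k"
    using assms jk(2) unfolding strictly_interlaced_def by auto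
  show False
  proof (cases "j \<le> k")
    case True
    then have "P ! k \<le> P ! j"
      using sorted_desc_nth_less_iff[OF P, of j k] jk assms
      unfolding strictly_interlaced_def by auto
    then show False using Q_k(1) jk(3) by simp
  next
    case False
    then have "P ! j \<le> P ! Suc k" "Suc k < length P"
      using sorted_desc_nth_less_iff[OF P, of "Suc k" j] jk by auto
    then show False using Q_k(2) jk(3) by simp
  qed
qed

lemma move_rows:
  fixes M :: "nat set"
  assumes "set P \<inter> set Q = {}" "distinct P" "distinct Q"
  defines "L \<equiv> move (P, Q) M"
  shows "set (fst L) \<union> set (snd L) = set P \<union> set Q"
    and "set (fst L) \<inter> set (snd L) = {}"
    and "length (fst L) + length (snd L) = length P + length Q"
proof -
  define X where "X = (set P - M) \<union> (set Q \<inter> M)"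
  define Y where "Y = (set Q - M) \<union> (set P \<inter> M)"
  have L: "L = (row_of X, row_of Y)" unfolding L_def move_def X_def Y_def by simp
  have fin: "finite X" "finite Y" unfolding X_def Y_def by auto
  have XY: "X \<union> Y = set P \<union> set Q" "X \<inter> Y = {}" using assms(1) unfolding X_def Y_def by auto
  have rows: "set (row_of S) = S" "length (row_of S) = card S" if "finite S" for S
    using that unfolding row_of_def by simp_all
  show "set (fst L) \<union> set (snd L) = set P \<union> set Q" "set (fst L) \<inter> set (snd L) = {}"
    using L rows fin XY by auto
  have "card X + card Y = card (set P) + card (set Q)"
    using card_Un_disjoint[OF fin XY(2)] card_Un_disjoint[OF _ _ assms(1)] XY(1) by simp
  then show "length (fst L) + length (snd L) = length P + length Q"
    using L rows fin assms(2,3) by (simp add: distinct_card)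
qed

lemma Sbar_defect_lengths:
  assumes "set P \<inter> set Q = {}" "distinct P" "distinct Q"
    and "L \<in> Sbar (P, Q)" "defect L = defect (P, Q)"
  shows "length (fst L) = length P" "length (snd L) = length Q"
proof -
  obtain M where "L = move (P, Q) M" using assms(4) unfolding Sbar_def by auto
  then have "length (fst L) + length (snd L) = length P + length Q"
    using move_rows(3)[OF assms(1-3)] by simp
  then show "length (fst L) = length P" "length (snd L) = length Q"
    using assms(5) unfolding defect_def by simp_all
qed

lemma swap_in_Sbar:
  assumes disj: "set P \<inter> set Q = {}" and sorted: "sorted_wrt (>) P" "sorted_wrt (>) Q"
    and ij: "i < length P" "j < length Q"
    and sorted_swap: "sorted_wrt (>) (P[i := Q ! j])" "sorted_wrt (>) (Q[j := P ! i])"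
  shows "(P[i := Q ! j], Q[j := P ! i]) \<in> Sbar (P, Q)"
proof -
  have dist: "distinct P" "distinct Q" using sorted by (simp_all add: sorted_desc_distinct)
  have P_i: "P ! i \<in> set P" "P ! i \<notin> set Q" and Q_j: "Q ! j \<in> set Q" "Q ! j \<notin> set P"
    using ij disj by (auto simp: disjoint_iff)
  have P': "set (P[i := Q ! j]) = (set P - {P ! i, Q ! j}) \<union> (set Q \<inter> {P ! i, Q ! j})"
    using set_update_distinct[OF dist(1) ij(1)] P_i Q_j by auto
  have Q': "set (Q[j := P ! i]) = (set Q - {P ! i, Q ! j}) \<union> (set P \<inter> {P ! i, Q ! j})"
    using set_update_distinct[OF dist(2) ij(2)] P_i Q_j by auto
  have "move (P, Q) {P ! i, Q ! j} = (row_of (set (P[i := Q ! j])), row_of (set (Q[j := P ! i])))"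
    unfolding move_def fst_conv snd_conv P' Q' by (rule refl)
  also have "\<dots> = (P[i := Q ! j], Q[j := P ! i])" using row_of_set sorted_swap by simp
  finally have "(P[i := Q ! j], Q[j := P ! i]) = move (P, Q) {P ! i, Q ! j}" ..
  moreover have "{P ! i, Q ! j} \<subseteq> singles (P, Q)" unfolding singles_def using P_i Q_j by auto
  ultimately show ?thesis unfolding Sbar_def by (intro CollectI exI conjI)
qed

lemma strictly_interlaced_swap_in_Sbar:
  assumes si: "strictly_interlaced P Q" and i: "i < length Q"
  shows "(P[i := Q ! i], Q[i := P ! i]) \<in> Sbar (P, Q)"
    and "Suc i < length P \<Longrightarrow> (P[Suc i := Q ! i], Q[i := P ! Suc i]) \<in> Sbar (P, Q)"
proof -
  note sorted = strictly_interlaced_sorted[OF si]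
  have len: "length Q \<le> length P" "length P \<le> Suc (length Q)"
    using si by (simp_all add: strictly_interlaced_def)
  have QP: "Q ! k < P ! k" if "k < length Q" for k
    using si that by (simp add: strictly_interlaced_def)
  have PQ: "P ! Suc k < Q ! k" if "k < length Q" "Suc k < length P" for k
    using si that by (simp add: strictly_interlaced_def)
  have QQ: "Q ! Suc k < Q ! k" if "Suc k < length Q" for k
    using sorted_desc_nth_less_iff[OF sorted(2), of "Suc k" k] that by simp
  have PP: "P ! Suc k < P ! k" if "Suc k < length P" for k
    using sorted_desc_nth_less_iff[OF sorted(1), of "Suc k" k] that by simp
  have i_P: "i < length P" using i len by simp
  show "(P[i := Q ! i], Q[i := P ! i]) \<in> Sbar (P, Q)"
  proof (rule swap_in_Sbar[OF strictly_interlaced_disjoint[OF si] sorted i_P i])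
    show "sorted_wrt (>) (P[i := Q ! i])"
    proof (rule sorted_desc_update[OF sorted(1) i_P])
      show "Q ! i < P ! (i - 1)" if "0 < i" using QP[OF i] PP[of "i - 1"] that i_P by simp
      show "P ! Suc i < Q ! i" if "Suc i < length P" using PQ[OF i that] .
    qed
    show "sorted_wrt (>) (Q[i := P ! i])"
    proof (rule sorted_desc_update[OF sorted(2) i])
      show "P ! i < Q ! (i - 1)" if "0 < i" using PQ[of "i - 1"] that i i_P by simp
      show "Q ! Suc i < P ! i" if "Suc i < length Q"
      proof -
        have "Suc i < length P" using that len by simp
        then show ?thesis using QP[OF that] PQ[OF i] QP[OF i] by simp
      qed
    qed
  qed
  show "(P[Suc i := Q ! i], Q[i := P ! Suc i]) \<in> Sbar (P, Q)" if Si: "Suc i < length P"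
  proof (rule swap_in_Sbar[OF strictly_interlaced_disjoint[OF si] sorted Si i])
    show "sorted_wrt (>) (P[Suc i := Q ! i])"
    proof (rule sorted_desc_update[OF sorted(1) Si])
      show "Q ! i < P ! (Suc i - 1)" using QP[OF i] by simp
      show "P ! Suc (Suc i) < Q ! i" if "Suc (Suc i) < length P"
        using PQ[of "Suc i"] PP[OF that] PQ[OF i Si] that len by simp
    qed
    show "sorted_wrt (>) (Q[i := P ! Suc i])"
    proof (rule sorted_desc_update[OF sorted(2) i])
      show "P ! Suc i < Q ! (i - 1)" if "0 < i"
        using PQ[OF i Si] QQ[of "i - 1"] that i by simp
      show "Q ! Suc i < P ! Suc i" if "Suc i < length Q" using QP[OF that] .
    qed
  qed
qed

text \<open>
  \<open>P\<^sub>i \<ge> U\<^sub>i > Q\<^sub>i \<ge> V\<^sub>i\<^sub>+\<^sub>1 > P\<^sub>i\<^sub>+\<^sub>1\<close>: the window \<open>[U\<^sub>i, U\<^sub>i\<^sub>-\<^sub>1)\<close> then meets the entries of \<open>(P, Q)\<close>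
  only in \<open>P\<^sub>i\<close> and \<open>Q\<^sub>i\<^sub>-\<^sub>1\<close>, and \<open>[V\<^sub>i\<^sub>+\<^sub>1, V\<^sub>i)\<close> only in \<open>P\<^sub>i\<close> and \<open>Q\<^sub>i\<close>.
\<close>

definition separates :: "nat list \<Rightarrow> nat list \<Rightarrow> nat list \<Rightarrow> nat list \<Rightarrow> bool" where
  "separates U V P Q \<longleftrightarrow> (\<forall>i<length P. U ! i \<le> P ! i) \<and>
     (\<forall>i<length Q. Q ! i < U ! i \<and> V ! Suc i \<le> Q ! i \<and> (Suc i < length P \<longrightarrow> P ! Suc i < V ! Suc i))"

lemma separates_strictly_interlaced:
  assumes "length Q \<le> length P" "length P \<le> Suc (length Q)" "separates U V P Q"
  shows "strictly_interlaced P Q"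
  using assms unfolding separates_def strictly_interlaced_def
  by (meson Suc_lessD le_less_trans less_le_trans order.strict_trans)

lemma separates_top_window:
  assumes si: "strictly_interlaced P Q" and sep: "separates U V P Q"
    and x: "x \<in> set P \<union> set Q" and i: "i < length P"
    and lo: "U ! i \<le> x" and hi: "0 < i \<Longrightarrow> x < U ! (i - 1)"
  shows "x = P ! i \<or> (0 < i \<and> x = Q ! (i - 1))"
proof -
  note sorted = strictly_interlaced_sorted[OF si]
  have len: "length Q \<le> length P" "length P \<le> Suc (length Q)"
    using si by (simp_all add: strictly_interlaced_def)
  from x consider (P) j where "j < length P" "x = P ! j" | (Q) j where "j < length Q" "x = Q ! j"
    by (auto simp: in_set_conv_nth)
  then show ?thesis
  proof cases
    case P
    have "j \<le> i"
    proof (rule ccontr)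
      assume "\<not> j \<le> i"
      then have "Suc i < length P" "i < length Q" using P len by auto
      then have "P ! Suc i < V ! Suc i" "V ! Suc i \<le> Q ! i" "Q ! i < U ! i"
        using sep unfolding separates_def by auto
      then have "P ! Suc i < x" using lo by simp
      then show False using sorted_desc_nth_less_iff[OF sorted(1), of "Suc i" j] P \<open>\<not> j \<le> i\<close> by simp
    qed
    moreover have "i \<le> j"
    proof (rule ccontr)
      assume "\<not> i \<le> j"
      then have "x < U ! (i - 1)" "U ! (i - 1) \<le> P ! (i - 1)"
        using hi sep i unfolding separates_def by auto
      then have "P ! j < P ! (i - 1)" using P by simp
      then have "i - 1 < j" using sorted_desc_nth_less_iff[OF sorted(1), of j "i - 1"] P i by simp
      then show False using \<open>\<not> i \<le> j\<close> by linarith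
    qed
    ultimately show ?thesis using P by simp
  next
    case Q
    have "j < i"
    proof (cases "i < length Q")
      case True
      then have "Q ! i < x" using sep lo unfolding separates_def by (meson less_le_trans)
      then show ?thesis using sorted_desc_nth_less_iff[OF sorted(2), of i j] Q True by simp
    qed (use Q in simp)
    moreover have "i - 1 \<le> j"
    proof (rule ccontr)
      assume "\<not> i - 1 \<le> j"
      define k where "k = i - 2"
      have k: "i = Suc (Suc k)" "j \<le> k" using \<open>\<not> i - 1 \<le> j\<close> unfolding k_def by arith+
      then have "x < U ! Suc k" "U ! Suc k \<le> P ! Suc k" "P ! Suc k < V ! Suc k" "V ! Suc k \<le> Q ! k"
        using hi sep i len unfolding separates_def by auto
      then have "Q ! j < Q ! k" using Q by simp
      then show False using sorted_desc_nth_less_iff[OF sorted(2), of j k] Q k i len by simp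
    qed
    ultimately have "0 < i" "j = i - 1" by linarith+
    then show ?thesis using Q by simp
  qed
qed

lemma separates_bottom_window:
  assumes si: "strictly_interlaced P Q" and sep: "separates U V P Q"
    and x: "x \<in> set P \<union> set Q" and i: "i < length Q"
    and lo: "V ! Suc i \<le> x" and hi: "x < V ! i"
  shows "x = P ! i \<or> x = Q ! i"
proof -
  note sorted = strictly_interlaced_sorted[OF si]
  have len: "length Q \<le> length P" "length P \<le> Suc (length Q)"
    using si by (simp_all add: strictly_interlaced_def)
  have below_prev: "x < Q ! (i - 1)" "x < P ! (i - 1)" if "0 < i"
  proof -
    obtain k where k: "i = Suc k" using \<open>0 < i\<close> not0_implies_Suc by blast
    then have "V ! i \<le> Q ! k" "Q ! k < U ! k" "U ! k \<le> P ! k" using sep i len unfolding separates_def by auto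
    then show "x < Q ! (i - 1)" "x < P ! (i - 1)" using hi k by simp_all
  qed
  from x consider (P) j where "j < length P" "x = P ! j" | (Q) j where "j < length Q" "x = Q ! j"
    by (auto simp: in_set_conv_nth)
  then show ?thesis
  proof cases
    case P
    have "j \<le> i"
    proof (rule ccontr)
      assume "\<not> j \<le> i"
      then have "P ! Suc i < V ! Suc i" using sep P i unfolding separates_def by simp
      then have "P ! Suc i < x" using lo by simp
      then show False using sorted_desc_nth_less_iff[OF sorted(1), of "Suc i" j] P \<open>\<not> j \<le> i\<close> by simp
    qed
    moreover have "i \<le> j"
    proof (rule ccontr)
      assume "\<not> i \<le> j"
      then have "i - 1 < j"
        using below_prev(2) sorted_desc_nth_less_iff[OF sorted(1), of j "i - 1"] P i len by simp
      then show False using \<open>\<not> i \<le> j\<close> by linarith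
    qed
    ultimately show ?thesis using P by simp
  next
    case Q
    have "j \<le> i"
    proof (rule ccontr)
      assume "\<not> j \<le> i"
      then have "Suc i < length Q" using Q by simp
      then have "Q ! Suc i < U ! Suc i" "U ! Suc i \<le> P ! Suc i" "P ! Suc i < V ! Suc i"
        using sep i len unfolding separates_def by auto
      then have "Q ! Suc i < x" using lo by simp
      then show False using sorted_desc_nth_less_iff[OF sorted(2), of "Suc i" j] Q \<open>\<not> j \<le> i\<close> by simp
    qed
    moreover have "i \<le> j"
    proof (rule ccontr)
      assume "\<not> i \<le> j"
      then have "i - 1 < j"
        using below_prev(1) sorted_desc_nth_less_iff[OF sorted(2), of j "i - 1"] Q i by simp
      then show False using \<open>\<not> i \<le> j\<close> by linarith
    qed
    ultimately show ?thesis using Q by simp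
  qed
qed

lemma rows_eq_of_windows:
  assumes si: "strictly_interlaced P Q" and sep: "separates U V P Q"
    and disj: "set T \<inter> set S = {}" and un: "set T \<union> set S = set P \<union> set Q"
    and lT: "length T = length P" and lS: "length S = length Q"
    and wT: "\<And>i. i < length T \<Longrightarrow> U ! i \<le> T ! i \<and> (0 < i \<longrightarrow> T ! i < U ! (i - 1))"
    and wS: "\<And>i. i < length S \<Longrightarrow> V ! Suc i \<le> S ! i \<and> S ! i < V ! i"
  shows "T = P \<and> S = Q"
proof -
  have len: "length Q \<le> length P" "length P \<le> Suc (length Q)"
    using si by (simp_all add: strictly_interlaced_def)
  have T_cases: "T ! i = P ! i \<or> (0 < i \<and> T ! i = Q ! (i - 1))" if "i < length T" for i
  proof (rule separates_top_window[OF si sep])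
    show "T ! i \<in> set P \<union> set Q" using un that by (metis UnI1 nth_mem)
  qed (use wT[OF that] that lT in simp_all)
  have S_cases: "S ! i = P ! i \<or> S ! i = Q ! i" if "i < length S" for i
  proof (rule separates_bottom_window[OF si sep])
    show "S ! i \<in> set P \<union> set Q" using un that by (metis UnI2 nth_mem)
  qed (use wS[OF that] that lS in simp_all)
  have T_ne_S: "T ! i \<noteq> S ! j" if "i < length T" "j < length S" for i j
    using disj that by (metis disjoint_iff nth_mem)
  have "(i < length T \<longrightarrow> T ! i = P ! i) \<and> (i < length S \<longrightarrow> S ! i = Q ! i)" for i
  proof (induction i)
    case 0
    have T0: "T ! 0 = P ! 0" if "0 < length T" using T_cases[OF that] by simp
    have "S ! 0 = Q ! 0" if S: "0 < length S"
    proof -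
      have T: "0 < length T" using S lT lS len by linarith
      have "S ! 0 \<noteq> P ! 0" using T_ne_S[OF T S] T0[OF T] by metis
      then show ?thesis using S_cases[OF S] by blast
    qed
    with T0 show ?case by blast
  next
    case (Suc i)
    have T: "T ! Suc i = P ! Suc i" if i: "Suc i < length T"
    proof -
      have S: "i < length S" using i lT lS len by simp
      have "T ! Suc i \<noteq> Q ! i" using T_ne_S[OF i S] Suc.IH S by metis
      then show ?thesis using T_cases[OF i] by auto
    qed
    have "S ! Suc i = Q ! Suc i" if S: "Suc i < length S"
    proof -
      have i: "Suc i < length T" using S lT lS len by simp
      have "S ! Suc i \<noteq> P ! Suc i" using T_ne_S[OF i S] T[OF i] by metis
      then show ?thesis using S_cases[OF S] by blast
    qed
    with T show ?case by blast
  qed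
  then show ?thesis using lT lS by (simp add: list_eq_iff_nth_eq)
qed

lemma Sbar_eq_of_windows:
  assumes si: "strictly_interlaced P Q" and sep: "separates U V P Q"
    and L: "L \<in> Sbar (P, Q)" "defect L = defect (P, Q)"
    and wT: "\<And>i. i < length (fst L) \<Longrightarrow> U ! i \<le> fst L ! i \<and> (0 < i \<longrightarrow> fst L ! i < U ! (i - 1))"
    and wS: "\<And>i. i < length (snd L) \<Longrightarrow> V ! Suc i \<le> snd L ! i \<and> snd L ! i < V ! i"
  shows "L = (P, Q)"
proof -
  have disj: "set P \<inter> set Q = {}" by (rule strictly_interlaced_disjoint[OF si])
  have dist: "distinct P" "distinct Q"
    using strictly_interlaced_sorted[OF si] by (simp_all add: sorted_desc_distinct)
  obtain M where "L = move (P, Q) M" using L(1) unfolding Sbar_def by auto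
  then have "set (fst L) \<union> set (snd L) = set P \<union> set Q" "set (fst L) \<inter> set (snd L) = {}"
    using move_rows[OF disj dist] by simp_all
  with rows_eq_of_windows[OF si sep _ _ Sbar_defect_lengths[OF disj dist L] wT wS] show ?thesis
    by (simp add: prod_eq_iff)
qed

lemma regular_nth_neq:
  assumes "regular (P, Q)" "i < length P" "j < length Q"
  shows "P ! i \<noteq> Q ! j"
  using assms unfolding regular_def by (metis disjoint_iff fst_conv nth_mem snd_conv)

lemma special1_regular_strictly_interlaced:
  assumes "special1 (A, B) m" "regular (A, B)"
  shows "strictly_interlaced A B"
proof -
  have len: "length A = Suc m" "length B = m"
    and le: "\<And>i. i < m \<Longrightarrow> B ! i \<le> A ! i \<and> A ! Suc i \<le> B ! i"
    using assms(1) unfolding special1_def by auto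
  have "B ! i < A ! i \<and> A ! Suc i < B ! i" if "i < m" for i
    using le[OF that] regular_nth_neq[OF assms(2), of i i] regular_nth_neq[OF assms(2), of "Suc i" i]
      that len by (simp add: order.strict_iff_order)
  then show ?thesis using len unfolding strictly_interlaced_def by simp
qed

lemma special0_regular_strictly_interlaced:
  assumes "special0 (C, D) m" "regular (C, D)"
  shows "strictly_interlaced C D"
proof -
  have len: "length C = m" "length D = m"
    and le: "\<And>i. i < m \<Longrightarrow> D ! i \<le> C ! i" "\<And>i. Suc i < m \<Longrightarrow> C ! Suc i \<le> D ! i"
    using assms(1) unfolding special0_def by auto
  have "D ! i < C ! i \<and> (Suc i < m \<longrightarrow> C ! Suc i < D ! i)" if "i < m" for i
    using le(1)[OF that] le(2)[of i] regular_nth_neq[OF assms(2), of i i]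
      regular_nth_neq[OF assms(2), of "Suc i" i] that len by (auto simp: order.strict_iff_order)
  then show ?thesis using len unfolding strictly_interlaced_def by simp
qed

lemma ball_atLeastAtMost_1: "(\<forall>i\<in>{1..n}. P i) \<longleftrightarrow> (\<forall>k<n. P (Suc k))"
proof
  assume "\<forall>k<n. P (Suc k)"
  moreover have "i = Suc (i - 1)" "i - 1 < n" if "i \<in> {1..n}" for i using that by auto
  ultimately show "\<forall>i\<in>{1..n}. P i" by metis
qed simp

lemma ent_Suc: "k < length xs \<Longrightarrow> ent xs (Suc k) = ereal (real (xs ! k))"
  by (simp add: ent_def)

lemma ereal_le_ent_iff: "ereal (real y) \<le> ent xs k \<longleftrightarrow> k = 0 \<or> (k \<le> length xs \<and> y \<le> xs ! (k - 1))"
  by (cases k) (auto simp: ent_def)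

lemma ereal_less_ent_iff: "ereal (real y) < ent xs k \<longleftrightarrow> k = 0 \<or> (k \<le> length xs \<and> y < xs ! (k - 1))"
  by (cases k) (auto simp: ent_def)

lemma ent_Suc_le_ereal_iff: "ent xs (Suc k) \<le> ereal (real y) \<longleftrightarrow> (k < length xs \<longrightarrow> xs ! k \<le> y)"
  by (simp add: ent_def)

lemma ent_Suc_less_ereal_iff: "ent xs (Suc k) < ereal (real y) \<longleftrightarrow> (k < length xs \<longrightarrow> xs ! k < y)"
  by (simp add: ent_def)

lemma disj_zero_iff: "(k = 0 \<or> P) \<longleftrightarrow> (0 < (k::nat) \<longrightarrow> P)"
  by auto

lemma Bplus_Suc_iff:
  "Bplus m (Suc m) (A, B) (C, D) \<longleftrightarrow> defect (C, D) = 1 - defect (A, B) \<and>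
    (\<forall>k<length D. k < length A \<and> D ! k \<le> A ! k \<and> (Suc k < length A \<longrightarrow> A ! Suc k < D ! k)) \<and>
    (\<forall>k<length C. (0 < k \<longrightarrow> k \<le> length B \<and> C ! k \<le> B ! (k - 1)) \<and> (k < length B \<longrightarrow> B ! k < C ! k))"
proof -
  have "(\<forall>k<length D. ent D (Suc k) \<le> ent A (Suc k) \<and> ent A (Suc (Suc k)) < ent D (Suc k)) \<longleftrightarrow>
      (\<forall>k<length D. k < length A \<and> D ! k \<le> A ! k \<and> (Suc k < length A \<longrightarrow> A ! Suc k < D ! k))"
    by (simp add: ent_Suc ereal_le_ent_iff ent_Suc_less_ereal_iff Suc_le_eq cong: all_cong)
  moreover have "(\<forall>k<length C. ent C (Suc k) \<le> ent B k \<and> ent B (Suc k) < ent C (Suc k)) \<longleftrightarrow>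
      (\<forall>k<length C. (0 < k \<longrightarrow> k \<le> length B \<and> C ! k \<le> B ! (k - 1)) \<and> (k < length B \<longrightarrow> B ! k < C ! k))"
    by (simp add: ent_Suc ereal_le_ent_iff ent_Suc_less_ereal_iff cong: all_cong)
      (simp add: disj_zero_iff)
  ultimately show ?thesis unfolding Bplus_def Let_def ball_atLeastAtMost_1 by simp
qed

lemma Bplus_same_iff:
  "Bplus m m (A, B) (C, D) \<longleftrightarrow> defect (C, D) = 1 - defect (A, B) \<and>
    (\<forall>k<length D. k < length A \<and> D ! k < A ! k \<and> (Suc k < length A \<longrightarrow> A ! Suc k \<le> D ! k)) \<and>
    (\<forall>k<length C. (0 < k \<longrightarrow> k \<le> length B \<and> C ! k < B ! (k - 1)) \<and> (k < length B \<longrightarrow> B ! k \<le> C ! k))"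
proof -
  have "(\<forall>k<length D. ent D (Suc k) < ent A (Suc k) \<and> ent A (Suc (Suc k)) \<le> ent D (Suc k)) \<longleftrightarrow>
      (\<forall>k<length D. k < length A \<and> D ! k < A ! k \<and> (Suc k < length A \<longrightarrow> A ! Suc k \<le> D ! k))"
    by (simp add: ent_Suc ereal_less_ent_iff ent_Suc_le_ereal_iff Suc_le_eq cong: all_cong)
  moreover have "(\<forall>k<length C. ent C (Suc k) < ent B k \<and> ent B (Suc k) \<le> ent C (Suc k)) \<longleftrightarrow>
      (\<forall>k<length C. (0 < k \<longrightarrow> k \<le> length B \<and> C ! k < B ! (k - 1)) \<and> (k < length B \<longrightarrow> B ! k \<le> C ! k))"
    by (simp add: ent_Suc ereal_less_ent_iff ent_Suc_le_ereal_iff cong: all_cong)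
      (simp add: disj_zero_iff)
  ultimately show ?thesis unfolding Bplus_def Let_def ball_atLeastAtMost_1 by simp
qed

lemma mem_D_Z_iff:
  "L' \<in> D_Z Z Z' m m' \<longleftrightarrow>
     Z \<in> Sbar Z \<and> defect Z = 1 \<and> L' \<in> Sbar Z' \<and> defect L' = 0 \<and> Bplus m m' Z L'"
  unfolding D_Z_def Dset_def BplusRel_def Sdef_def by auto

lemma mem_D_Z'_iff:
  "L \<in> D_Z' Z Z' m m' \<longleftrightarrow>
     L \<in> Sbar Z \<and> defect L = 1 \<and> Z' \<in> Sbar Z' \<and> defect Z' = 0 \<and> Bplus m m' L Z'"
  unfolding D_Z'_def Dset_def BplusRel_def Sdef_def by auto

context
  fixes A B C D :: "nat list" and m :: nat
  assumes special_Z: "special1 (A, B) m" and special_Z': "special0 (C, D) (Suc m)"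
    and regular_Z': "regular (C, D)" and Bplus_Z_Z': "Bplus m (Suc m) (A, B) (C, D)"
    and unique_partner:
      "\<And>L'. L' \<in> Sbar (C, D) \<Longrightarrow> defect L' = 0 \<Longrightarrow> Bplus m (Suc m) (A, B) L' \<Longrightarrow> L' = (C, D)"
begin

private lemma lengths: "length A = Suc m" "length B = m" "length C = Suc m" "length D = Suc m"
  using special_Z special_Z' unfolding special1_def special0_def by auto

private lemma CD_interlaced: "strictly_interlaced C D"
  by (rule special0_regular_strictly_interlaced[OF special_Z' regular_Z'])

private lemma C_D_strict: "k < Suc m \<Longrightarrow> D ! k < C ! k" "k < m \<Longrightarrow> C ! Suc k < D ! k"
  using CD_interlaced lengths unfolding strictly_interlaced_def by auto

private lemma partner_iff:
  assumes "length C' = Suc m" "length D' = Suc m"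
  shows "Bplus m (Suc m) (A, B) (C', D') \<longleftrightarrow>
    (\<forall>k<Suc m. D' ! k \<le> A ! k \<and> (k < m \<longrightarrow> A ! Suc k < D' ! k)) \<and>
    (\<forall>k<Suc m. (0 < k \<longrightarrow> C' ! k \<le> B ! (k - 1)) \<and> (k < m \<longrightarrow> B ! k < C' ! k))"
  using assms lengths unfolding Bplus_Suc_iff defect_def by auto

private lemma Z_Z'_bounds:
  "k < Suc m \<Longrightarrow> D ! k \<le> A ! k" "k < m \<Longrightarrow> A ! Suc k < D ! k"
  "0 < k \<Longrightarrow> k < Suc m \<Longrightarrow> C ! k \<le> B ! (k - 1)" "k < m \<Longrightarrow> B ! k < C ! k"
  using Bplus_Z_Z' unfolding partner_iff[OF lengths(3,4)] by auto

private lemma no_diagonal_swap_Suc: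
  assumes i: "i < Suc m" and C_A: "C ! i \<le> A ! i" and B_D: "i < m \<Longrightarrow> B ! i < D ! i"
  shows False
proof -
  let ?C = "C[i := D ! i]" and ?D = "D[i := C ! i]"
  have lengths': "length ?C = Suc m" "length ?D = Suc m" using lengths by simp_all
  have "(?C, ?D) \<in> Sbar (C, D)"
    using strictly_interlaced_swap_in_Sbar(1)[OF CD_interlaced] i lengths by simp
  moreover have "defect (?C, ?D) = 0" using lengths' by (simp add: defect_def)
  moreover have "Bplus m (Suc m) (A, B) (?C, ?D)"
    unfolding partner_iff[OF lengths']
  proof (intro allI impI conjI)
    fix k assume k: "k < Suc m"
    show "?D ! k \<le> A ! k" using C_A Z_Z'_bounds(1)[OF k] k lengths by (cases "k = i") auto
    show "A ! Suc k < ?D ! k" if "k < m"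
      using Z_Z'_bounds(2)[OF that] C_D_strict(1)[OF k] k lengths by (cases "k = i") auto
    show "?C ! k \<le> B ! (k - 1)" if "0 < k"
      using Z_Z'_bounds(3)[OF that k] C_D_strict(1)[OF k] k lengths by (cases "k = i") auto
    show "B ! k < ?C ! k" if "k < m"
      using Z_Z'_bounds(4)[OF that] B_D that k lengths by (cases "k = i") auto
  qed
  ultimately have "(?C, ?D) = (C, D)" by (rule unique_partner)
  then have "D ! i = C ! i" using i lengths by (metis nth_list_update_eq prod.inject)
  then show False using C_D_strict(1)[OF i] by simp
qed

private lemma no_offdiagonal_swap_Suc:
  assumes i: "i < m" and D_B: "D ! i \<le> B ! i" and A_C: "A ! Suc i < C ! Suc i"
  shows False
proof -
  let ?C = "C[Suc i := D ! i]" and ?D = "D[i := C ! Suc i]"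
  have lengths': "length ?C = Suc m" "length ?D = Suc m" using lengths by simp_all
  have "(?C, ?D) \<in> Sbar (C, D)"
    using strictly_interlaced_swap_in_Sbar(2)[OF CD_interlaced] i lengths by simp
  moreover have "defect (?C, ?D) = 0" using lengths' by (simp add: defect_def)
  moreover have "Bplus m (Suc m) (A, B) (?C, ?D)"
    unfolding partner_iff[OF lengths']
  proof (intro allI impI conjI)
    fix k assume k: "k < Suc m"
    show "?D ! k \<le> A ! k"
      using Z_Z'_bounds(1)[OF k] C_D_strict(2)[OF i] Z_Z'_bounds(1)[of i] i k lengths
      by (cases "k = i") auto
    show "A ! Suc k < ?D ! k" if "k < m"
      using Z_Z'_bounds(2)[OF that] A_C k lengths by (cases "k = i") auto
    show "?C ! k \<le> B ! (k - 1)" if "0 < k"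
      using Z_Z'_bounds(3)[OF that k] D_B k lengths by (cases "k = Suc i") auto
    show "B ! k < ?C ! k" if "k < m"
      using Z_Z'_bounds(4)[OF that] C_D_strict(2)[OF i] k lengths by (cases "k = Suc i") auto
  qed
  ultimately have "(?C, ?D) = (C, D)" by (rule unique_partner)
  then have "D ! i = C ! Suc i" using i lengths by (metis Suc_mono nth_list_update_eq prod.inject)
  then show False using C_D_strict(2)[OF i] by simp
qed

private lemma A_less_C: "i \<le> m \<Longrightarrow> A ! i < C ! i"
proof (induction rule: inc_induct)
  case base
  show ?case using no_diagonal_swap_Suc[of m] by fastforce
next
  case (step n)
  then have "B ! n < D ! n" using no_offdiagonal_swap_Suc[of n] by fastforce
  then show ?case using no_diagonal_swap_Suc[of n] step.hyps by fastforce
qed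

private lemma B_less_D: "i < m \<Longrightarrow> B ! i < D ! i"
  using no_offdiagonal_swap_Suc[of i] A_less_C[of "Suc i"] by fastforce

private lemma separates_Z: "separates D C A B"
  unfolding separates_def lengths
  using Z_Z'_bounds(1) Z_Z'_bounds(3)[of "Suc _"] B_less_D A_less_C by (simp add: Suc_le_eq)

private lemma AB_interlaced: "strictly_interlaced A B"
  by (rule separates_strictly_interlaced[OF _ _ separates_Z]) (simp_all add: lengths)

lemma partner_unique_Suc:
  assumes L: "L \<in> Sbar (A, B)" "defect L = 1" and Bplus_L: "Bplus m (Suc m) L (C, D)"
  shows "L = (A, B)"
proof -
  obtain T S where TS: "L = (T, S)" by fastforce
  have defect_L: "defect L = defect (A, B)" using L(2) lengths by (simp add: defect_def)
  have lengths_TS: "length T = Suc m" "length S = m"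
    using Sbar_defect_lengths[OF strictly_interlaced_disjoint[OF AB_interlaced] _ _ L(1) defect_L]
      strictly_interlaced_sorted[OF AB_interlaced] lengths TS by (simp_all add: sorted_desc_distinct)
  have bounds: "k < Suc m \<Longrightarrow> D ! k \<le> T ! k" "k < m \<Longrightarrow> T ! Suc k < D ! k"
    "0 < k \<Longrightarrow> k < Suc m \<Longrightarrow> C ! k \<le> S ! (k - 1)" "k < m \<Longrightarrow> S ! k < C ! k" for k
    using Bplus_L unfolding TS Bplus_Suc_iff lengths lengths_TS by auto
  show ?thesis unfolding TS
  proof (rule Sbar_eq_of_windows[OF AB_interlaced separates_Z])
    show "(T, S) \<in> Sbar (A, B)" "defect (T, S) = defect (A, B)" using L(1) defect_L TS by simp_all
    show "D ! i \<le> fst (T, S) ! i \<and> (0 < i \<longrightarrow> fst (T, S) ! i < D ! (i - 1))"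
      if "i < length (fst (T, S))" for i
      using bounds(1)[of i] bounds(2)[of "i - 1"] that lengths_TS by (cases i) auto
    show "C ! Suc i \<le> snd (T, S) ! i \<and> snd (T, S) ! i < C ! i"
      if "i < length (snd (T, S))" for i
      using bounds(3)[of "Suc i"] bounds(4)[of i] that lengths_TS by simp
  qed
qed

end

context
  fixes A B C D :: "nat list" and m :: nat
  assumes special_Z: "special1 (A, B) m" and special_Z': "special0 (C, D) m"
    and regular_Z: "regular (A, B)" and Bplus_Z_Z': "Bplus m m (A, B) (C, D)"
    and unique_partner:
      "\<And>L. L \<in> Sbar (A, B) \<Longrightarrow> defect L = 1 \<Longrightarrow> Bplus m m L (C, D) \<Longrightarrow> L = (A, B)"
begin

private lemma lengths_same: "length A = Suc m" "length B = m" "length C = m" "length D = m"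
  using special_Z special_Z' unfolding special1_def special0_def by auto

private lemma AB_interlaced_same: "strictly_interlaced A B"
  by (rule special1_regular_strictly_interlaced[OF special_Z regular_Z])

private lemma A_B_strict: "k < m \<Longrightarrow> B ! k < A ! k" "k < m \<Longrightarrow> A ! Suc k < B ! k"
  using AB_interlaced_same lengths_same unfolding strictly_interlaced_def by auto

private lemma C_le_D: "Suc k < m \<Longrightarrow> C ! Suc k \<le> D ! k"
  using special_Z' unfolding special0_def by simp

private lemma partner_iff_same:
  assumes "length A' = Suc m" "length B' = m"
  shows "Bplus m m (A', B') (C, D) \<longleftrightarrow>
    (\<forall>k<m. D ! k < A' ! k \<and> A' ! Suc k \<le> D ! k) \<and>
    (\<forall>k<m. (0 < k \<longrightarrow> C ! k < B' ! (k - 1)) \<and> B' ! k \<le> C ! k)"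
  using assms lengths_same unfolding Bplus_same_iff defect_def by auto

private lemma Z_Z'_bounds_same:
  "k < m \<Longrightarrow> D ! k < A ! k" "k < m \<Longrightarrow> A ! Suc k \<le> D ! k"
  "0 < k \<Longrightarrow> k < m \<Longrightarrow> C ! k < B ! (k - 1)" "k < m \<Longrightarrow> B ! k \<le> C ! k"
  using Bplus_Z_Z' unfolding partner_iff_same[OF lengths_same(1,2)] by auto

private lemma no_diagonal_swap_same:
  assumes i: "i < m" and D_B: "D ! i < B ! i" and A_C: "A ! i \<le> C ! i"
  shows False
proof -
  let ?A = "A[i := B ! i]" and ?B = "B[i := A ! i]"
  have lengths': "length ?A = Suc m" "length ?B = m" using lengths_same by simp_all
  have "(?A, ?B) \<in> Sbar (A, B)"
    using strictly_interlaced_swap_in_Sbar(1)[OF AB_interlaced_same] i lengths_same by simp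
  moreover have "defect (?A, ?B) = 1" using lengths' by (simp add: defect_def)
  moreover have "Bplus m m (?A, ?B) (C, D)"
    unfolding partner_iff_same[OF lengths']
  proof (intro allI impI conjI)
    fix k assume k: "k < m"
    show "D ! k < ?A ! k" using Z_Z'_bounds_same(1)[OF k] D_B k lengths_same by (cases "k = i") auto
    show "?A ! Suc k \<le> D ! k"
      using Z_Z'_bounds_same(2)[OF k] Z_Z'_bounds_same(4)[of "Suc k"] C_le_D[of k] i k lengths_same
      by (cases "Suc k = i") auto
    show "C ! k < ?B ! (k - 1)" if "0 < k"
      using Z_Z'_bounds_same(3)[OF that k] A_B_strict(1)[OF i] that k lengths_same
      by (cases "k - 1 = i") auto
    show "?B ! k \<le> C ! k" using Z_Z'_bounds_same(4)[OF k] A_C k lengths_same by (cases "k = i") auto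
  qed
  ultimately have "(?A, ?B) = (A, B)" by (rule unique_partner)
  then have "B ! i = A ! i" using i lengths_same by (metis less_SucI nth_list_update_eq prod.inject)
  then show False using A_B_strict(1)[OF i] by simp
qed

private lemma no_offdiagonal_swap_same:
  assumes i: "i < m" and B_D: "B ! i \<le> D ! i" and C_A: "Suc i < m \<Longrightarrow> C ! Suc i < A ! Suc i"
  shows False
proof -
  let ?A = "A[Suc i := B ! i]" and ?B = "B[i := A ! Suc i]"
  have lengths': "length ?A = Suc m" "length ?B = m" using lengths_same by simp_all
  have "(?A, ?B) \<in> Sbar (A, B)"
    using strictly_interlaced_swap_in_Sbar(2)[OF AB_interlaced_same] i lengths_same by simp
  moreover have "defect (?A, ?B) = 1" using lengths' by (simp add: defect_def)
  moreover have "Bplus m m (?A, ?B) (C, D)"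
    unfolding partner_iff_same[OF lengths']
  proof (intro allI impI conjI)
    fix k assume k: "k < m"
    show "D ! k < ?A ! k"
      using Z_Z'_bounds_same(1)[OF k] A_B_strict(2)[OF i] k lengths_same by (cases "k = Suc i") auto
    show "?A ! Suc k \<le> D ! k" using Z_Z'_bounds_same(2)[OF k] B_D k lengths_same by (cases "k = i") auto
    show "C ! k < ?B ! (k - 1)" if "0 < k"
      using Z_Z'_bounds_same(3)[OF that k] C_A that k lengths_same by (cases "k - 1 = i") auto
    show "?B ! k \<le> C ! k"
      using Z_Z'_bounds_same(4)[OF k] A_B_strict(2)[OF i] Z_Z'_bounds_same(4)[OF i] k lengths_same
      by (cases "k = i") auto
  qed
  ultimately have "(?A, ?B) = (A, B)" by (rule unique_partner)
  then have "B ! i = A ! Suc i" using i lengths_same by (metis Suc_mono nth_list_update_eq prod.inject)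
  then show False using A_B_strict(2)[OF i] by simp
qed

private lemma Z'_below_Z_step:
  assumes "i < m" "Suc i < m \<Longrightarrow> C ! Suc i < A ! Suc i"
  shows "D ! i < B ! i \<and> C ! i < A ! i"
  using no_offdiagonal_swap_same[of i] no_diagonal_swap_same[of i] assms by fastforce

private lemma D_less_B_C_less_A: "i < m \<Longrightarrow> D ! i < B ! i \<and> C ! i < A ! i"
  by (induction rule: strict_inc_induct) (simp_all add: Z'_below_Z_step)

private lemma separates_Z': "separates B A C D"
  unfolding separates_def lengths_same
  using Z_Z'_bounds_same(2,4) D_less_B_C_less_A by simp

private lemma CD_interlaced_same: "strictly_interlaced C D"
  by (rule separates_strictly_interlaced[OF _ _ separates_Z']) (simp_all add: lengths_same)

lemma partner_unique_same:
  assumes L: "L \<in> Sbar (C, D)" "defect L = 0" and Bplus_L: "Bplus m m (A, B) L"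
  shows "L = (C, D)"
proof -
  obtain T S where TS: "L = (T, S)" by fastforce
  have defect_L: "defect L = defect (C, D)" using L(2) lengths_same by (simp add: defect_def)
  have lengths_TS: "length T = m" "length S = m"
    using Sbar_defect_lengths[OF strictly_interlaced_disjoint[OF CD_interlaced_same] _ _ L(1) defect_L]
      strictly_interlaced_sorted[OF CD_interlaced_same] lengths_same TS
    by (simp_all add: sorted_desc_distinct)
  have bounds: "k < m \<Longrightarrow> S ! k < A ! k" "k < m \<Longrightarrow> A ! Suc k \<le> S ! k"
    "0 < k \<Longrightarrow> k < m \<Longrightarrow> T ! k < B ! (k - 1)" "k < m \<Longrightarrow> B ! k \<le> T ! k" for k
    using Bplus_L unfolding TS Bplus_same_iff lengths_same lengths_TS by auto
  show ?thesis unfolding TS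
  proof (rule Sbar_eq_of_windows[OF CD_interlaced_same separates_Z'])
    show "(T, S) \<in> Sbar (C, D)" "defect (T, S) = defect (C, D)" using L(1) defect_L TS by simp_all
    show "B ! i \<le> fst (T, S) ! i \<and> (0 < i \<longrightarrow> fst (T, S) ! i < B ! (i - 1))"
      if "i < length (fst (T, S))" for i
      using bounds(3,4)[of i] that lengths_TS by simp
    show "A ! Suc i \<le> snd (T, S) ! i \<and> snd (T, S) ! i < A ! i"
      if "i < length (snd (T, S))" for i
      using bounds(1,2)[of i] that lengths_TS by simp
  qed
qed

end

lemma D_Z'_eq_singleton_Suc:
  assumes special: "special1 Z m" "special0 Z' (Suc m)" and regular: "regular Z'"
    and D_Z: "D_Z Z Z' m (Suc m) = {Z'}"
  shows "D_Z' Z Z' m (Suc m) = {Z}"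
proof -
  obtain A B C D where Z: "Z = (A, B)" "Z' = (C, D)" by fastforce
  have Z_Z': "Z \<in> Sbar Z" "defect Z = 1" "Z' \<in> Sbar Z'" "defect Z' = 0" "Bplus m (Suc m) Z Z'"
    using D_Z mem_D_Z_iff[of Z' Z Z' m "Suc m"] by simp_all
  have unique: "L' = Z'" if "L' \<in> Sbar Z'" "defect L' = 0" "Bplus m (Suc m) Z L'" for L'
    using that Z_Z'(1,2) D_Z mem_D_Z_iff[of L' Z Z' m "Suc m"] by auto
  have "L = Z" if "L \<in> D_Z' Z Z' m (Suc m)" for L
    using partner_unique_Suc[OF special[unfolded Z] regular[unfolded Z] Z_Z'(5)[unfolded Z]]
      unique[unfolded Z] that[unfolded mem_D_Z'_iff] Z by blast
  then show ?thesis using Z_Z' mem_D_Z'_iff[of Z Z Z' m "Suc m"] by blast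
qed

lemma D_Z_eq_singleton_same:
  assumes special: "special1 Z m" "special0 Z' m" and regular: "regular Z"
    and D_Z': "D_Z' Z Z' m m = {Z}"
  shows "D_Z Z Z' m m = {Z'}"
proof -
  obtain A B C D where Z: "Z = (A, B)" "Z' = (C, D)" by fastforce
  have Z_Z': "Z \<in> Sbar Z" "defect Z = 1" "Z' \<in> Sbar Z'" "defect Z' = 0" "Bplus m m Z Z'"
    using D_Z' mem_D_Z'_iff[of Z Z Z' m m] by simp_all
  have unique: "L = Z" if "L \<in> Sbar Z" "defect L = 1" "Bplus m m L Z'" for L
    using that Z_Z'(3,4) D_Z' mem_D_Z'_iff[of L Z Z' m m] by auto
  have "L' = Z'" if "L' \<in> D_Z Z Z' m m" for L'
    using partner_unique_same[OF special[unfolded Z] regular[unfolded Z] Z_Z'(5)[unfolded Z]]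
      unique[unfolded Z] that[unfolded mem_D_Z_iff] Z by blast
  then show ?thesis using Z_Z' mem_D_Z_iff[of Z' Z Z' m m] by blast
qed

theorem lemma0805:
  fixes Z Z' :: symbol and m m' :: nat
  assumes "special1 Z m" and "special0 Z' m'" and "m' = m \<or> m' = m + 1"
  shows "(m' = m + 1 \<and> regular Z' \<and> D_Z Z Z' m m' = {Z'} \<longrightarrow> D_Z' Z Z' m m' = {Z})
       \<and> (m' = m \<and> regular Z \<and> D_Z' Z Z' m m' = {Z} \<longrightarrow> D_Z Z Z' m m' = {Z'})"
proof (intro conjI impI)
  assume "m' = m + 1 \<and> regular Z' \<and> D_Z Z Z' m m' = {Z'}"
  then show "D_Z' Z Z' m m' = {Z}" using D_Z'_eq_singleton_Suc[OF assms(1), of Z'] assms(2) by (elim conjE) simp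
next
  assume "m' = m \<and> regular Z \<and> D_Z' Z Z' m m' = {Z}"
  then show "D_Z Z Z' m m' = {Z'}" using D_Z_eq_singleton_same[OF assms(1), of Z'] assms(2) by (elim conjE) simp
qed

end
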